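(* The action of ${\rm PSL}_2(\mathbb Z)$ on $\Delta$ by automorphisms, in which $\rho$ sends $A\mapsto B$, $B\mapsto C$, $C\mapsto A$, $\alpha\mapsto\beta$, $\beta\mapsto\gamma$, $\gamma\mapsto\alpha$ and $\sigma$ sends $A\mapsto B$, $B\mapsto A$, $C\mapsto C+\frac{AB-BA}{q-q^{-1}}$, $\alpha\mapsto\beta$, $\beta\mapsto\alpha$, $\gamma\mapsto\gamma$, is faithful.
   Context: Let $\mathbb F$ be a field and fix a nonzero $q\in\mathbb F$ with $q^4\neq 1$. The universal Askey--Wilson algebra $\Delta$ is the associative $\mathbb F$-algebra with 1 with generators $A,B,C$ subject to the relations that each of $A+\frac{qBC-q^{-1}CB}{q^2-q^{-2}}$, $B+\frac{qCA-q^{-1}AC}{q^2-q^{-2}}$, $C+\frac{qAB-q^{-1}BA}{q^2-q^{-2}}$ is central; $\alpha,\beta,\gamma$ are these three central elements (in order) each multiplied by $q+q^{-1}$. ${\rm PSL}_2(\mathbb Z)$ is presented by generators $\rho,\sigma$ with relations $\rho^3=\sigma^2=1$; the stated assignments define an action of ${\rm PSL}_2(\mathbb Z)$ on $\Delta$ by automorphisms. *)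

theory Defs
  imports Main "HOL-Library.Poly_Mapping"
begin

datatype gen = GA | GB | GC

text \<open>Words in the generators, forming the free monoid (written additively
  so that the library's monoid algebra construction applies).\<close>
datatype word = W "gen list"

instantiation word :: monoid_add
begin
definition zero_word :: word where "zero_word = W []"
fun plus_word :: "word \<Rightarrow> word \<Rightarrow> word" where
  "plus_word (W u) (W v) = W (u @ v)"
instance
proof
  fix a b c :: word
  show "a + b + c = a + (b + c)" by (cases a; cases b; cases c) simp
  show "0 + a = a" by (cases a) (simp add: zero_word_def)
  show "a + 0 = a" by (cases a) (simp add: zero_word_def)
qed
end

text \<open>The free associative algebra over the field 'a: finitely supported
  functions word => 'a with convolution product (a ring_1).\<close>
type_synonym 'a falg = "word \<Rightarrow>\<^sub>0 'a"

definition sc :: "'a::field \<Rightarrow> 'a falg" where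
  "sc c = Poly_Mapping.single (W []) c"

definition gn :: "gen \<Rightarrow> 'a::field falg" where
  "gn g = Poly_Mapping.single (W [g]) 1"

abbreviation "genA \<equiv> gn GA"
abbreviation "genB \<equiv> gn GB"
abbreviation "genC \<equiv> gn GC"

fun wmon :: "(gen \<Rightarrow> 'a::field falg) \<Rightarrow> word \<Rightarrow> 'a falg" where
  "wmon f (W l) = prod_list (map f l)"

definition subst :: "(gen \<Rightarrow> 'a::field falg) \<Rightarrow> 'a falg \<Rightarrow> 'a falg" where
  "subst f x = (\<Sum>m\<in>Poly_Mapping.keys x. sc (Poly_Mapping.lookup x m) * wmon f m)"

inductive_set ideal_gen :: "'b::ring set \<Rightarrow> 'b set" for R where
  base: "r \<in> R \<Longrightarrow> r \<in> ideal_gen R"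
| zero: "0 \<in> ideal_gen R"
| add: "x \<in> ideal_gen R \<Longrightarrow> y \<in> ideal_gen R \<Longrightarrow> x + y \<in> ideal_gen R"
| lmult: "x \<in> ideal_gen R \<Longrightarrow> a * x \<in> ideal_gen R"
| rmult: "x \<in> ideal_gen R \<Longrightarrow> x * a \<in> ideal_gen R"

definition cen :: "'a::field \<Rightarrow> 'a falg \<Rightarrow> 'a falg \<Rightarrow> 'a falg \<Rightarrow> 'a falg" where
  "cen q X Y Z = X + sc (inverse (q^2 - inverse q ^ 2)) *
      (sc q * Y * Z - sc (inverse q) * Z * Y)"

definition aw_rels :: "'a::field \<Rightarrow> 'a falg set" where
  "aw_rels q = {c * g - g * c | c g.
      c \<in> {cen q genA genB genC, cen q genB genC genA, cen q genC genA genB} \<and>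
      g \<in> {genA, genB, genC}}"

text \<open>Delta = (free algebra) / aw_ideal q.\<close>
definition aw_ideal :: "'a::field \<Rightarrow> 'a falg set" where
  "aw_ideal q = ideal_gen (aw_rels q)"

datatype psl_gen = Rho | Sig

fun img :: "'a::field \<Rightarrow> psl_gen \<Rightarrow> gen \<Rightarrow> 'a falg" where
  "img q Rho GA = genB"
| "img q Rho GB = genC"
| "img q Rho GC = genA"
| "img q Sig GA = genB"
| "img q Sig GB = genA"
| "img q Sig GC = genC + sc (inverse (q - inverse q)) * (genA * genB - genB * genA)"

text \<open>Action of a word g1 g2 ... gn in rho, sigma: the composite
  phi_g1 o phi_g2 o ... o phi_gn (on the free algebra; it descends to Delta).\<close>
fun act :: "'a::field \<Rightarrow> psl_gen list \<Rightarrow> 'a falg \<Rightarrow> 'a falg" where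
  "act q [] x = x"
| "act q (g # w) x = subst (img q g) (act q w x)"

text \<open>Word problem of PSL_2(Z) = < rho, sigma | rho^3 = sigma^2 = 1 >:
  the congruence on words generated by deleting/inserting relators.\<close>
inductive psl_step :: "psl_gen list \<Rightarrow> psl_gen list \<Rightarrow> bool" where
  "r \<in> {[Rho, Rho, Rho], [Sig, Sig]} \<Longrightarrow> psl_step (u @ r @ v) (u @ v)"

definition psl_eq :: "psl_gen list \<Rightarrow> psl_gen list \<Rightarrow> bool" where
  "psl_eq = (sup psl_step psl_step\<inverse>\<inverse>)\<^sup>*\<^sup>*"

end

theory Submission
  imports Defs "HOL-Library.Product_Plus"
begin

(* Let T_v (v in Z^2) be the q-twisted translations of functions Z^2 -> F; they satisfy
   T_v T_w = q^(wedge v w) T_(v+w), and put E_v = T_v + T_(-v). For a frame (n1, n2) with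
   wedge n1 n2 = 1, sending A, B, C to -E_n1, -E_n2, -E_(n1+n2) respects the Askey--Wilson
   relations, and precomposing with rho or sigma yields the same representation for the frame
   moved by the corresponding matrix in SL_2(Z). So if a word w acts trivially on Delta, the
   operators E_v distinguish v up to sign and force the matrix of w to be +-I. A ping-pong
   argument on the quadrants of Z^2 shows that no nonempty reduced word in rho, sigma has
   matrix +-I, hence w reduces to the empty word. *)

fun word_prod :: "(gen \<Rightarrow> 'b::monoid_mult) \<Rightarrow> word \<Rightarrow> 'b" where
  "word_prod h (W l) = prod_list (map h l)"

lemma word_prod_plus: "word_prod h (m + m') = word_prod h m * word_prod h m'"
  by (cases m; cases m') simp

lemma word_prod_zero: "word_prod h 0 = 1"
  by (simp add: zero_word_def)

definition free_eval :: "('a::field \<Rightarrow> 'b::ring_1) \<Rightarrow> (gen \<Rightarrow> 'b) \<Rightarrow> 'a falg \<Rightarrow> 'b" where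
  "free_eval \<kappa> h x = (\<Sum>m\<in>Poly_Mapping.keys x. \<kappa> (Poly_Mapping.lookup x m) * word_prod h m)"

lemma update_eq_single_add:
  "a \<notin> Poly_Mapping.keys f \<Longrightarrow> Poly_Mapping.update a b f = Poly_Mapping.single a b + f"
  by (rule poly_mapping_eqI) (auto simp: lookup_update lookup_add lookup_single when_def in_keys_iff)

locale central_scalars =
  fixes \<kappa> :: "'a::field \<Rightarrow> 'b::ring_1"
  assumes add: "\<kappa> (a + b) = \<kappa> a + \<kappa> b"
    and mult: "\<kappa> (a * b) = \<kappa> a * \<kappa> b"
    and one: "\<kappa> 1 = 1"
    and central: "\<kappa> a * y = y * \<kappa> a"
begin

lemma zero: "\<kappa> 0 = 0"
  using add[of 0 0] by simp

lemma free_eval_superset: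
  "finite S \<Longrightarrow> Poly_Mapping.keys x \<subseteq> S \<Longrightarrow>
   free_eval \<kappa> h x = (\<Sum>m\<in>S. \<kappa> (Poly_Mapping.lookup x m) * word_prod h m)"
  unfolding free_eval_def by (rule sum.mono_neutral_left) (auto simp: in_keys_iff zero)

lemma free_eval_zero [simp]: "free_eval \<kappa> h 0 = 0"
  by (simp add: free_eval_def)

lemma free_eval_add: "free_eval \<kappa> h (x + y) = free_eval \<kappa> h x + free_eval \<kappa> h y"
proof -
  let ?S = "Poly_Mapping.keys x \<union> Poly_Mapping.keys y"
  have "free_eval \<kappa> h (x + y) = (\<Sum>m\<in>?S. \<kappa> (Poly_Mapping.lookup (x + y) m) * word_prod h m)"
    by (rule free_eval_superset) (auto simp: keys_add)
  also have "\<dots> = (\<Sum>m\<in>?S. \<kappa> (Poly_Mapping.lookup x m) * word_prod h m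
                          + \<kappa> (Poly_Mapping.lookup y m) * word_prod h m)"
    by (simp add: lookup_add add distrib_right)
  also have "\<dots> = free_eval \<kappa> h x + free_eval \<kappa> h y"
    by (simp add: sum.distrib free_eval_superset[of ?S])
  finally show ?thesis .
qed

lemma free_eval_uminus: "free_eval \<kappa> h (- x) = - free_eval \<kappa> h x"
  using free_eval_add[of h x "- x"] by (simp add: add_eq_0_iff2)

lemma free_eval_diff: "free_eval \<kappa> h (x - y) = free_eval \<kappa> h x - free_eval \<kappa> h y"
  using free_eval_add[of h x "- y"] by (simp add: free_eval_uminus)

lemma free_eval_sum: "free_eval \<kappa> h (sum f S) = (\<Sum>i\<in>S. free_eval \<kappa> h (f i))"
  by (induction S rule: infinite_finite_induct) (auto simp: free_eval_add)

lemma free_eval_single: "free_eval \<kappa> h (Poly_Mapping.single m c) = \<kappa> c * word_prod h m"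
  by (cases "c = 0") (simp_all add: free_eval_def zero)

lemma free_eval_single_mult:
  "free_eval \<kappa> h (Poly_Mapping.single m c * y) = \<kappa> c * word_prod h m * free_eval \<kappa> h y"
proof (induction y rule: update_induct)
  case const
  then show ?case by simp
next
  case (update f m' c')
  have "\<kappa> c' * (word_prod h m * word_prod h m') = word_prod h m * (\<kappa> c' * word_prod h m')"
    by (metis central mult.assoc)
  with update show ?case
    by (simp add: update_eq_single_add distrib_left mult_single free_eval_add free_eval_single
        word_prod_plus mult mult.assoc)
qed

lemma free_eval_mult: "free_eval \<kappa> h (x * y) = free_eval \<kappa> h x * free_eval \<kappa> h y"
  by (induction x rule: update_induct)
    (simp_all add: update_eq_single_add distrib_right free_eval_add free_eval_single_mult
      free_eval_single)

lemma free_eval_sc [simp]: "free_eval \<kappa> h (sc c) = \<kappa> c"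
  using free_eval_single[of h 0 c] by (simp add: sc_def word_prod_zero zero_word_def)

lemma free_eval_gn [simp]: "free_eval \<kappa> h (gn g) = h g"
  by (simp add: gn_def free_eval_single one)

lemma free_eval_wmon: "free_eval \<kappa> h (wmon f m) = word_prod (\<lambda>g. free_eval \<kappa> h (f g)) m"
proof (cases m)
  case (W l)
  have "free_eval \<kappa> h 1 = 1"
    using free_eval_single[of h 0 1] by (simp add: one word_prod_zero)
  then show ?thesis
    unfolding W by (induction l) (simp_all add: free_eval_mult)
qed

lemma free_eval_subst:
  "free_eval \<kappa> h (subst f x) = free_eval \<kappa> (\<lambda>g. free_eval \<kappa> h (f g)) x"
  by (simp add: subst_def free_eval_sum free_eval_mult free_eval_wmon
      free_eval_def[of _ "\<lambda>g. free_eval \<kappa> h (f g)" x])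

lemma free_eval_ideal_gen:
  "x \<in> ideal_gen R \<Longrightarrow> (\<And>r. r \<in> R \<Longrightarrow> free_eval \<kappa> h r = 0) \<Longrightarrow> free_eval \<kappa> h x = 0"
  by (induction x rule: ideal_gen.induct) (auto simp: free_eval_add free_eval_mult)

end

typedef (overloaded) ('a::field) linop =
  "{L :: (int \<times> int \<Rightarrow> 'a) \<Rightarrow> (int \<times> int \<Rightarrow> 'a).
     (\<forall>f g. L (\<lambda>u. f u + g u) = (\<lambda>u. L f u + L g u)) \<and> (\<forall>c f. L (\<lambda>u. c * f u) = (\<lambda>u. c * L f u))}"
  morphisms linop_apply Abs_linop
  by (rule exI[of _ "\<lambda>f. f"]) auto

setup_lifting type_definition_linop

lemma linop_apply_add: "linop_apply L (\<lambda>u. f u + g u) = (\<lambda>u. linop_apply L f u + linop_apply L g u)"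
  using linop_apply[of L] by auto

lemma linop_apply_scale: "linop_apply L (\<lambda>u. c * f u) = (\<lambda>u. c * linop_apply L f u)"
  using linop_apply[of L] by auto

lemma linop_eqI: "(\<And>f u. linop_apply A f u = linop_apply B f u) \<Longrightarrow> A = B"
  by (metis linop_apply_inject ext)

instantiation linop :: (field) ring_1
begin

lift_definition zero_linop :: "'a linop" is "\<lambda>f u. 0"
  by (auto simp: fun_eq_iff)
lift_definition one_linop :: "'a linop" is "\<lambda>f. f"
  by auto
lift_definition plus_linop :: "'a linop \<Rightarrow> 'a linop \<Rightarrow> 'a linop" is "\<lambda>A B f u. A f u + B f u"
  by (auto simp: fun_eq_iff algebra_simps)
lift_definition uminus_linop :: "'a linop \<Rightarrow> 'a linop" is "\<lambda>A f u. - A f u"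
  by (auto simp: fun_eq_iff algebra_simps)
lift_definition minus_linop :: "'a linop \<Rightarrow> 'a linop \<Rightarrow> 'a linop" is "\<lambda>A B f u. A f u - B f u"
  by (auto simp: fun_eq_iff algebra_simps)
lift_definition times_linop :: "'a linop \<Rightarrow> 'a linop \<Rightarrow> 'a linop" is "\<lambda>A B f. A (B f)"
  by auto

instance
proof
  fix a b c :: "'a linop"
  note defs = plus_linop.rep_eq uminus_linop.rep_eq minus_linop.rep_eq times_linop.rep_eq
    zero_linop.rep_eq one_linop.rep_eq
  show "a * b * c = a * (b * c)" "1 * a = a" "a * 1 = a" "(a + b) * c = a * c + b * c"
    "0 + a = a" "- a + a = 0" "a - b = a + - b"
    by (rule linop_eqI; simp add: defs)+
  show "a * (b + c) = a * b + a * c" by (rule linop_eqI) (simp add: defs linop_apply_add)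
  show "a + b + c = a + (b + c)" by (rule linop_eqI) (simp add: defs add.assoc)
  show "a + b = b + a" by (rule linop_eqI) (simp add: defs add.commute)
  have "linop_apply (0::'a linop) (\<lambda>u. 1) 0 \<noteq> linop_apply 1 (\<lambda>u. 1) 0"
    by (simp add: defs)
  then show "(0::'a linop) \<noteq> 1" by metis
qed

end

lemmas linop_apply_simps = plus_linop.rep_eq uminus_linop.rep_eq minus_linop.rep_eq
  times_linop.rep_eq zero_linop.rep_eq one_linop.rep_eq

lift_definition scalar_op :: "'a::field \<Rightarrow> 'a linop" is "\<lambda>c f u. c * f u"
  by (auto simp: algebra_simps)

interpretation scalar_op: central_scalars scalar_op
  by unfold_locales
    (rule linop_eqI; simp add: linop_apply_simps scalar_op.rep_eq algebra_simps linop_apply_scale)+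

definition wedge :: "int \<times> int \<Rightarrow> int \<times> int \<Rightarrow> int" where
  "wedge v w = fst v * snd w - snd v * fst w"

lemma wedge_uminus_left [simp]: "wedge (- v) w = - wedge v w"
  and wedge_uminus_right [simp]: "wedge v (- w) = - wedge v w"
  and wedge_add_self_left [simp]: "wedge (v + w) w = wedge v w"
  by (simp_all add: wedge_def algebra_simps)

lift_definition weyl_op :: "'a::field \<Rightarrow> int \<times> int \<Rightarrow> 'a linop" is
  "\<lambda>q v f u. q powi wedge v u * f (u - v)"
  by (auto simp: algebra_simps)

lemma weyl_op_mult:
  assumes "q \<noteq> 0"
  shows "weyl_op q v * weyl_op q w = scalar_op (q powi wedge v w) * weyl_op q (v + w)"
proof (rule linop_eqI)
  fix f u
  have "wedge v u + wedge w (u - v) = wedge v w + wedge (v + w) u"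
    by (simp add: wedge_def algebra_simps)
  then have "q powi wedge v u * q powi wedge w (u - v) = q powi wedge v w * q powi wedge (v + w) u"
    using assms by (simp flip: power_int_add)
  then show "linop_apply (weyl_op q v * weyl_op q w) f u
      = linop_apply (scalar_op (q powi wedge v w) * weyl_op q (v + w)) f u"
    by (simp add: linop_apply_simps scalar_op.rep_eq weyl_op.rep_eq diff_diff_eq mult.assoc)
qed

definition weyl_sym :: "'a::field \<Rightarrow> int \<times> int \<Rightarrow> 'a linop" where
  "weyl_sym q v = weyl_op q v + weyl_op q (- v)"

lemma weyl_sym_uminus [simp]: "weyl_sym q (- v) = weyl_sym q v"
  by (simp add: weyl_sym_def add.commute)

lemma weyl_sym_uminus_diff [simp]: "weyl_sym q (- v - w) = weyl_sym q (v + w)"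
  using weyl_sym_uminus[of q "v + w"] by simp

lemma weyl_sym_diff_commute: "weyl_sym q (w - v) = weyl_sym q (v - w)"
  using weyl_sym_uminus[of q "v - w"] by simp

lemma weyl_sym_mult:
  assumes "q \<noteq> 0" and "wedge v w = 1"
  shows "weyl_sym q v * weyl_sym q w = scalar_op q * weyl_sym q (v + w) + scalar_op (inverse q) * weyl_sym q (v - w)"
proof -
  have "weyl_op q v * weyl_op q (- w) = scalar_op (inverse q) * weyl_op q (v - w)"
    and "weyl_op q (- v) * weyl_op q w = scalar_op (inverse q) * weyl_op q (- (v - w))"
    and "weyl_op q v * weyl_op q w = scalar_op q * weyl_op q (v + w)"
    and "weyl_op q (- v) * weyl_op q (- w) = scalar_op q * weyl_op q (- (v + w))"
    using assms by (simp_all add: weyl_op_mult power_int_minus)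
  then show ?thesis
    by (simp add: weyl_sym_def algebra_simps)
qed

lemma weyl_sym_mult_swap:
  assumes "q \<noteq> 0" and "wedge v w = 1"
  shows "weyl_sym q w * weyl_sym q v = scalar_op (inverse q) * weyl_sym q (v + w) + scalar_op q * weyl_sym q (v - w)"
proof -
  have "wedge w (- v) = 1"
    using assms(2) by (simp add: wedge_def algebra_simps)
  from weyl_sym_mult[OF assms(1) this]
  have "weyl_sym q w * weyl_sym q (- v)
      = scalar_op q * weyl_sym q (- (v - w)) + scalar_op (inverse q) * weyl_sym q (v + w)"
    by (simp only: diff_minus_eq_add minus_diff_eq) (simp only: diff_conv_add_uminus add.commute)
  then show ?thesis
    by (simp only: weyl_sym_uminus add.commute)
qed

lemma weyl_sym_commutator:
  assumes "q \<noteq> 0" and "wedge v w = 1"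
  shows "weyl_sym q v * weyl_sym q w - weyl_sym q w * weyl_sym q v
    = scalar_op (q - inverse q) * (weyl_sym q (v + w) - weyl_sym q (v - w))"
  unfolding weyl_sym_mult[OF assms] weyl_sym_mult_swap[OF assms]
  by (rule linop_eqI) (simp add: linop_apply_simps scalar_op.rep_eq algebra_simps)

lemma weyl_sym_q_commutator:
  assumes "q \<noteq> 0" and "wedge v w = 1"
  shows "scalar_op q * weyl_sym q w * weyl_sym q v - scalar_op (inverse q) * weyl_sym q v * weyl_sym q w
    = scalar_op (q\<^sup>2 - inverse q ^ 2) * weyl_sym q (v - w)"
  unfolding mult.assoc weyl_sym_mult[OF assms] weyl_sym_mult_swap[OF assms]
  by (rule linop_eqI) (simp add: linop_apply_simps scalar_op.rep_eq algebra_simps power2_eq_square assms(1))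

lemma weyl_sym_aw_relation:
  assumes "q \<noteq> 0" and "q\<^sup>2 - inverse q ^ 2 \<noteq> 0" and "x + y + z = 0" and "wedge x y = 1"
  shows "- weyl_sym q x + scalar_op (inverse (q\<^sup>2 - inverse q ^ 2)) *
      (scalar_op q * (- weyl_sym q y) * (- weyl_sym q z)
       - scalar_op (inverse q) * (- weyl_sym q z) * (- weyl_sym q y)) = 0"
proof -
  have "z = - (x + y)"
    using assms(3) by (simp add: eq_neg_iff_add_eq_0 algebra_simps)
  then have z: "weyl_sym q z = weyl_sym q (x + y)"
    by (simp only: weyl_sym_uminus)
  have "wedge (x + y) y = 1"
    using assms(4) by simp
  note q_commutator = weyl_sym_q_commutator[OF assms(1) this]
  have "scalar_op (inverse (q\<^sup>2 - inverse q ^ 2)) * scalar_op (q\<^sup>2 - inverse q ^ 2) = (1 :: 'a linop)"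
    using assms(2) by (simp flip: scalar_op.mult add: scalar_op.one)
  with z q_commutator show ?thesis
    by (simp add: mult.assoc[symmetric])
qed

definition aw_rep :: "'a::field \<Rightarrow> int \<times> int \<Rightarrow> int \<times> int \<Rightarrow> gen \<Rightarrow> 'a linop" where
  "aw_rep q n1 n2 g = - weyl_sym q (case g of GA \<Rightarrow> n1 | GB \<Rightarrow> n2 | GC \<Rightarrow> n1 + n2)"

lemma aw_rep_cen:
  assumes "q \<noteq> 0" and "q\<^sup>2 - inverse q ^ 2 \<noteq> 0" and "wedge n1 n2 = 1"
    and "(a, b, c) \<in> {(GA, GB, GC), (GB, GC, GA), (GC, GA, GB)}"
  shows "free_eval scalar_op (aw_rep q n1 n2) (cen q (gn a) (gn b) (gn c)) = 0"
proof -
  have wedge2: "wedge n2 (- (n1 + n2)) = 1" and wedge3: "wedge (- (n1 + n2)) n1 = 1"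
    using assms(3) by (simp_all add: wedge_def algebra_simps)
  have sum2: "n2 + - (n1 + n2) + n1 = 0" and sum3: "- (n1 + n2) + n1 + n2 = 0"
    by simp_all
  note rel = weyl_sym_aw_relation[OF assms(1,2) right_minus assms(3)]
    weyl_sym_aw_relation[OF assms(1,2) sum2 wedge2]
    weyl_sym_aw_relation[OF assms(1,2) sum3 wedge3]
  show ?thesis
    using assms(4) rel
    by (auto simp: cen_def aw_rep_def scalar_op.free_eval_add scalar_op.free_eval_diff
        scalar_op.free_eval_mult)
qed

lemma aw_rep_ideal:
  assumes "q \<noteq> 0" and "q\<^sup>2 - inverse q ^ 2 \<noteq> 0" and "wedge n1 n2 = 1" and "x \<in> aw_ideal q"
  shows "free_eval scalar_op (aw_rep q n1 n2) x = 0"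
  using assms(4) unfolding aw_ideal_def
proof (rule scalar_op.free_eval_ideal_gen)
  fix r assume "r \<in> aw_rels q"
  then obtain c g where r: "r = c * g - g * c"
    and "c \<in> {cen q genA genB genC, cen q genB genC genA, cen q genC genA genB}"
    unfolding aw_rels_def by blast
  then have "free_eval scalar_op (aw_rep q n1 n2) c = 0"
    using aw_rep_cen[OF assms(1-3)] by blast
  then show "free_eval scalar_op (aw_rep q n1 n2) r = 0"
    by (simp add: r scalar_op.free_eval_diff scalar_op.free_eval_mult)
qed

lemma aw_rep_img_Rho:
  "(\<lambda>g. free_eval scalar_op (aw_rep q n1 n2) (img q Rho g)) = aw_rep q n2 (- (n1 + n2))"
proof
  fix g
  have "n2 + - (n1 + n2) = - n1"
    by (simp add: algebra_simps)
  then show "free_eval scalar_op (aw_rep q n1 n2) (img q Rho g) = aw_rep q n2 (- (n1 + n2)) g"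
    by (cases g) (simp_all add: aw_rep_def)
qed

lemma aw_rep_img_Sig:
  assumes "q \<noteq> 0" and "q - inverse q \<noteq> 0" and "wedge n1 n2 = 1"
  shows "(\<lambda>g. free_eval scalar_op (aw_rep q n1 n2) (img q Sig g)) = aw_rep q n2 (- n1)"
proof
  fix g
  have "scalar_op (inverse (q - inverse q)) * scalar_op (q - inverse q) = (1 :: 'a linop)"
    using assms(2) by (simp flip: scalar_op.mult add: scalar_op.one)
  then have "- weyl_sym q (n1 + n2) + scalar_op (inverse (q - inverse q)) *
      (weyl_sym q n1 * weyl_sym q n2 - weyl_sym q n2 * weyl_sym q n1) = - weyl_sym q (n1 - n2)"
    by (simp add: weyl_sym_commutator[OF assms(1,3)] mult.assoc[symmetric] algebra_simps)
  then show "free_eval scalar_op (aw_rep q n1 n2) (img q Sig g) = aw_rep q n2 (- n1) g"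
    by (cases g) (simp_all add: aw_rep_def scalar_op.free_eval_add scalar_op.free_eval_diff
        scalar_op.free_eval_mult weyl_sym_diff_commute[of q n2])
qed

lemma linop_apply_weyl_sym_delta:
  "linop_apply (weyl_sym q v) (\<lambda>u. if u = 0 then 1 else 0) u
    = (if u = v then 1 else 0) + (if u = - v then 1 else 0)"
proof -
  have "linop_apply (weyl_op q v') (\<lambda>u. if u = 0 then 1 else 0) u = (if u = v' then 1 else 0)" for v'
    by (cases "u = v'") (simp_all add: weyl_op.rep_eq wedge_def)
  then show ?thesis
    by (simp add: weyl_sym_def linop_apply_simps)
qed

lemma weyl_sym_eq_imp:
  assumes "weyl_sym q n = weyl_sym q m"
  shows "n = m \<or> n = - m"
proof (rule ccontr)
  assume neq: "\<not> (n = m \<or> n = - m)"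
  define \<delta> :: "int \<times> int \<Rightarrow> 'a" where "\<delta> u = (if u = 0 then 1 else 0)" for u
  have nonzero: "v \<noteq> 0 \<Longrightarrow> v \<noteq> - v" for v :: "int \<times> int"
    by (cases v) (auto simp: zero_prod_def)
  have "linop_apply (weyl_sym q n) \<delta> u = linop_apply (weyl_sym q m) \<delta> u" for u
    using assms by simp
  then have "(if u = n then 1 else 0) + (if u = - n then 1 else 0)
      = (if u = m then 1 else (0 :: 'a)) + (if u = - m then 1 else 0)" for u
    unfolding \<delta>_def linop_apply_weyl_sym_delta .
  from this[of m] this[of n] neq nonzero[of m] nonzero[of n] show False
    by (cases "m = 0") (auto split: if_splits)
qed

fun gen_map :: "psl_gen \<Rightarrow> int \<times> int \<Rightarrow> int \<times> int" where
  "gen_map Rho (x, y) = (- y, x - y)"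
| "gen_map Sig (x, y) = (- y, x)"

fun word_map :: "psl_gen list \<Rightarrow> int \<times> int \<Rightarrow> int \<times> int" where
  "word_map [] v = v"
| "word_map (g # w) v = gen_map g (word_map w v)"

lemma word_map_append: "word_map (u @ w) v = word_map u (word_map w v)"
  by (induction u) auto

lemma gen_map_Rho_cube [simp]: "gen_map Rho (gen_map Rho (gen_map Rho v)) = v"
  and gen_map_Sig_square [simp]: "gen_map Sig (gen_map Sig v) = - v"
  by (cases v; simp)+

lemma word_map_add: "word_map w (v + v') = word_map w v + word_map w v'"
proof (induction w)
  case (Cons g w)
  then show ?case
    by (cases g; cases "word_map w v"; cases "word_map w v'") auto
qed simp

lemma word_map_uminus: "word_map w (- v) = - word_map w v"
proof (induction w)
  case (Cons g w)
  then show ?case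
    by (cases g; cases "word_map w v") auto
qed simp

lemma word_map_diff: "word_map w (v - v') = word_map w v - word_map w v'"
  using word_map_add[of w v "- v'"] by (simp add: word_map_uminus)

lemma wedge_word_map: "wedge (word_map w v) (word_map w v') = wedge v v'"
proof (induction w)
  case (Cons g w)
  then show ?case
    by (cases g; cases "word_map w v"; cases "word_map w v'") (auto simp: wedge_def algebra_simps)
qed simp

lemma act_append: "act q (u @ w) x = act q u (act q w x)"
  by (induction u) auto

lemma free_eval_aw_rep_act:
  assumes "q \<noteq> 0" and "q - inverse q \<noteq> 0"
  shows "free_eval scalar_op (aw_rep q (1, 0) (0, 1)) (act q w x)
    = free_eval scalar_op (aw_rep q (word_map w (1, 0)) (word_map w (0, 1))) x"
proof (induction w arbitrary: x rule: rev_induct)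
  case (snoc g w)
  let ?n1 = "word_map w (1, 0)" and ?n2 = "word_map w (0, 1)"
  have "wedge ?n1 ?n2 = 1"
    unfolding wedge_word_map by (simp add: wedge_def)
  moreover have "word_map w (-1, -1) = - (?n1 + ?n2)" "word_map w (-1, 0) = - ?n1"
    using word_map_uminus[of w "(1, 1)"] word_map_add[of w "(1, 0)" "(0, 1)"]
      word_map_uminus[of w "(1, 0)"] by simp_all
  ultimately have "(\<lambda>h. free_eval scalar_op (aw_rep q ?n1 ?n2) (img q g h))
      = aw_rep q (word_map (w @ [g]) (1, 0)) (word_map (w @ [g]) (0, 1))"
    by (cases g) (simp_all add: aw_rep_img_Rho aw_rep_img_Sig[OF assms] word_map_append)
  with snoc show ?case
    by (simp add: act_append scalar_op.free_eval_subst)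
qed simp

lemma aw_rep_eq_standard_imp:
  assumes "aw_rep q n1 n2 = aw_rep q (1, 0) (0, 1)"
  obtains s where "\<bar>s\<bar> = 1" and "n1 = (s, 0)" and "n2 = (0, s)"
proof -
  have "weyl_sym q n1 = weyl_sym q (1, 0)" "weyl_sym q n2 = weyl_sym q (0, 1)"
    "weyl_sym q (n1 + n2) = weyl_sym q (1, 1)"
    using fun_cong[OF assms, of GA] fun_cong[OF assms, of GB] fun_cong[OF assms, of GC]
    by (simp_all add: aw_rep_def)
  then have "n1 = (1, 0) \<or> n1 = (-1, 0)" "n2 = (0, 1) \<or> n2 = (0, -1)"
    "n1 + n2 = (1, 1) \<or> n1 + n2 = (-1, -1)"
    by (auto dest!: weyl_sym_eq_imp)
  then show ?thesis
    using that[of 1] that[of "-1"] by auto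
qed

definition reduced :: "psl_gen list \<Rightarrow> bool" where
  "reduced w \<longleftrightarrow> \<not> (\<exists>u r v. r \<in> {[Rho, Rho, Rho], [Sig, Sig]} \<and> w = u @ r @ v)"

lemma reduced_infix: "reduced (u @ w @ v) \<Longrightarrow> reduced w"
  unfolding reduced_def by (metis append.assoc)

lemma not_reduced_Sig_Sig [simp]: "\<not> reduced (Sig # Sig # w)"
  and not_reduced_Rho_Rho_Rho [simp]: "\<not> reduced (Rho # Rho # Rho # w)"
  unfolding reduced_def by (metis append_Cons append_Nil insert_iff)+

text \<open>Ping-pong zones: where a reduced word ending in Rho sends a vector of negative slope,
  according to how the word begins.\<close>
fun pp_zone :: "psl_gen list \<Rightarrow> (int \<times> int) set" where
  "pp_zone [] = {v. fst v * snd v < 0}"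
| "pp_zone (Sig # w) = {v. fst v * snd v < 0 \<and> \<bar>fst v\<bar> \<noteq> \<bar>snd v\<bar>}"
| "pp_zone (Rho # Rho # w) = {v. 0 < fst v * snd v \<and> \<bar>snd v\<bar> < \<bar>fst v\<bar>}"
| "pp_zone (Rho # w) = {v. 0 < fst v * snd v \<and> \<bar>fst v\<bar> < \<bar>snd v\<bar>}"

lemma pp_zone_off_diagonal: "w \<noteq> [] \<Longrightarrow> v \<in> pp_zone w \<Longrightarrow> \<bar>fst v\<bar> \<noteq> \<bar>snd v\<bar>"
  by (induction w rule: pp_zone.induct) auto

lemma word_map_pp_zone:
  assumes "reduced w" and "w \<noteq> [] \<Longrightarrow> last w = Rho" and "fst v * snd v < 0"
  shows "word_map w v \<in> pp_zone w"
  using assms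
proof (induction w)
  case (Cons g w)
  have IH: "word_map w v \<in> pp_zone w"
    using Cons reduced_infix[of "[g]" w "[]"] by (auto split: if_splits)
  show ?case
  proof (cases g)
    case Rho
    then show ?thesis using IH Cons.prems(1)
      by (cases w rule: pp_zone.cases; cases "word_map w v")
        (auto simp: zero_less_mult_iff mult_less_0_iff abs_if)
  next
    case Sig
    then show ?thesis using IH Cons.prems
      by (cases w rule: pp_zone.cases; cases "word_map w v")
        (auto simp: zero_less_mult_iff mult_less_0_iff)
  qed
qed simp

text \<open>A scalar matrix preserves the diagonals, which the zones of nonempty words avoid; a
  trailing Sig is absorbed by testing on (-1, -1) instead of (1, -1).\<close>
lemma reduced_word_map_scalar_imp_Nil:
  assumes "reduced w" and "word_map w (1, 0) = (s, 0)" and "word_map w (0, 1) = (0, s)"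
    and "\<bar>s\<bar> = 1"
  shows "w = []"
proof (rule ccontr)
  assume "w \<noteq> []"
  have antidiag: "word_map w (1, -1) = (s, - s)"
    using word_map_diff[of w "(1, 0)" "(0, 1)"] assms(2,3) by simp
  have diag: "word_map w (-1, -1) = (- s, - s)"
    using word_map_uminus[of w "(1, 1)"] word_map_add[of w "(1, 0)" "(0, 1)"] assms(2,3) by simp
  show False
  proof (cases "last w")
    case Rho
    then have "word_map w (1, -1) \<in> pp_zone w"
      using assms(1) by (intro word_map_pp_zone) auto
    with pp_zone_off_diagonal[OF \<open>w \<noteq> []\<close>] antidiag show False
      by fastforce
  next
    case Sig
    then obtain w' where w: "w = w' @ [Sig]"
      using \<open>w \<noteq> []\<close> by (metis append_butlast_last_id)
    have "w' \<noteq> []"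
      using w assms(2,4) by auto
    have "reduced w'"
      using assms(1) reduced_infix[of "[]" w' "[Sig]"] w by simp
    have "last w' = Rho"
    proof (rule ccontr)
      assume "last w' \<noteq> Rho"
      then have "w' = butlast w' @ [Sig]"
        using \<open>w' \<noteq> []\<close> by (metis psl_gen.exhaust append_butlast_last_id)
      then have "w = butlast w' @ [Sig, Sig] @ []"
        using w by (metis append.assoc append_Cons append_Nil append_Nil2)
      with assms(1) show False
        unfolding reduced_def by blast
    qed
    then have "word_map w' (1, -1) \<in> pp_zone w'"
      using \<open>reduced w'\<close> by (intro word_map_pp_zone) auto
    moreover have "word_map w' (1, -1) = (- s, - s)"
      using diag by (simp add: w word_map_append)
    ultimately show False
      using pp_zone_off_diagonal[OF \<open>w' \<noteq> []\<close>] by fastforce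
  qed
qed

lemma psl_eq_Nil_if_word_map_scalar:
  assumes "word_map w (1, 0) = (s, 0)" and "word_map w (0, 1) = (0, s)" and "\<bar>s\<bar> = 1"
  shows "psl_eq w []"
  using assms
proof (induction "length w" arbitrary: w s rule: less_induct)
  case less
  show ?case
  proof (cases "reduced w")
    case True
    then show ?thesis
      using reduced_word_map_scalar_imp_Nil[OF True less.prems] by (simp add: psl_eq_def)
  next
    case False
    then obtain u r v where r: "r \<in> {[Rho, Rho, Rho], [Sig, Sig]}" and w: "w = u @ r @ v"
      unfolding reduced_def by blast
    then have step: "psl_eq w (u @ v)"
      unfolding psl_eq_def by (auto intro: psl_step.intros)
    have shorter: "length (u @ v) < length w"
      using r w by auto
    have split: "word_map w x = word_map u (word_map r (word_map v x))" for x
      by (simp only: w word_map_append)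
    obtain s' where "word_map (u @ v) (1, 0) = (s', 0)" "word_map (u @ v) (0, 1) = (0, s')"
      "\<bar>s'\<bar> = 1"
    proof (cases "r = [Sig, Sig]")
      case True
      then have "word_map w x = - word_map (u @ v) x" for x
        by (simp add: split word_map_append word_map_uminus)
      with less.prems show ?thesis
        by (intro that[of "- s"]) (auto simp: minus_equation_iff)
    next
      case False
      with r have "word_map w x = word_map (u @ v) x" for x
        by (simp add: split word_map_append)
      with less.prems show ?thesis
        by (intro that[of s]) auto
    qed
    with less.hyps[OF shorter] have "psl_eq (u @ v) []" .
    with step show ?thesis
      unfolding psl_eq_def by (rule rtranclp_trans)
  qed
qed

lemma q_power4_ne_1_imp:
  fixes q :: "'a::field"
  assumes "q \<noteq> 0" and "q ^ 4 \<noteq> 1"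
  shows "q\<^sup>2 - inverse q ^ 2 \<noteq> 0" and "q - inverse q \<noteq> 0"
proof -
  have "q\<^sup>2 * (q\<^sup>2 - inverse q ^ 2) = q ^ 4 - 1"
    using assms(1) by (simp add: algebra_simps power2_eq_square power4_eq_xxxx)
  with assms show "q\<^sup>2 - inverse q ^ 2 \<noteq> 0"
    by auto
  moreover have "q\<^sup>2 - inverse q ^ 2 = (q - inverse q) * (q + inverse q)"
    by (simp add: algebra_simps power2_eq_square)
  ultimately show "q - inverse q \<noteq> 0"
    by auto
qed

theorem theorem3p13:
  fixes q :: "'a::field" and w :: "psl_gen list"
  assumes "q \<noteq> 0" and "q ^ 4 \<noteq> 1"
    and "\<forall>x :: 'a falg. act q w x - x \<in> aw_ideal q"
  shows "psl_eq w []"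
proof -
  note q = q_power4_ne_1_imp[OF assms(1,2)]
  let ?rep = "aw_rep q (word_map w (1, 0)) (word_map w (0, 1))"
  have "free_eval scalar_op ?rep x = free_eval scalar_op (aw_rep q (1, 0) (0, 1)) x" for x
  proof -
    have "free_eval scalar_op (aw_rep q (1, 0) (0, 1)) (act q w x - x) = 0"
      using assms(3) by (intro aw_rep_ideal[OF assms(1) q(1)]) (simp_all add: wedge_def)
    then show ?thesis
      by (simp add: scalar_op.free_eval_diff free_eval_aw_rep_act[OF assms(1) q(2)])
  qed
  from this[of "gn g" for g] have "?rep = aw_rep q (1, 0) (0, 1)"
    by auto
  then obtain s where "\<bar>s\<bar> = 1" "word_map w (1, 0) = (s, 0)" "word_map w (0, 1) = (0, s)"
    by (rule aw_rep_eq_standard_imp)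
  then show ?thesis
    by (intro psl_eq_Nil_if_word_map_scalar)
qed

end
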